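(* Let $A\in\mathbb{R}^{n_x\times n_x}$, $B\in\mathbb{R}^{n_x\times n_u}$, and let $Q\in\mathbb{R}^{n_x\times n_x}$, $R\in\mathbb{R}^{n_u\times n_u}$ be symmetric positive definite, with $(A,B)$ stabilizable. Let $\mathcal{K}=\{K\in\mathbb{R}^{n_u\times n_x}:\rho(A-BK)<1\}$ and for $K\in\mathcal{K}$ let $$J(K)=\sup_{\omega\in[0,2\pi]}\lambda_{\max}^{1/2}\Big((e^{-j\omega}I-A+BK)^{-\mathsf{T}}(Q+K^{\mathsf{T}}RK)(e^{j\omega}I-A+BK)^{-1}\Big),$$ and let $J^*=\min_{K\in\mathcal{K}}J(K)$. Let $\mathcal{K}^c$ denote the complement of $\mathcal{K}$ in $\mathbb{R}^{n_u\times n_x}$. Then for every $\gamma\ge J^*$, the sublevel set $\mathcal{K}_\gamma=\{K\in\mathcal{K}:J(K)\le\gamma\}$ is strictly separated from $\mathcal{K}^c$, i.e. $\mathrm{dist}(\mathcal{K}_\gamma,\mathcal{K}^c)>0$.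
   Context: $\rho(\cdot)$ denotes spectral radius, $j=\sqrt{-1}$, $\lambda_{\max}$ the largest eigenvalue of a Hermitian matrix. Distances are measured in the Frobenius norm: $\mathrm{dist}(S,T)=\inf\{\|X-Y\|_F: X\in S, Y\in T\}$. *)

theory Defs
  imports "HOL-Analysis.Analysis"
begin

definition cmat :: "real^'n^'m \<Rightarrow> complex^'n^'m" where
  "cmat M = (\<chi> i j. complex_of_real (M $ i $ j))"

definition eigenvalues :: "complex^'n^'n \<Rightarrow> complex set" where
  "eigenvalues M = {z. det (mat z - M) = 0}"

definition spectral_radius :: "real^'n^'n \<Rightarrow> real" where
  "spectral_radius M = Max (cmod ` eigenvalues (cmat M))"

(* largest eigenvalue of a Hermitian matrix (whose eigenvalues are real) *)
definition lambda_max :: "complex^'n^'n \<Rightarrow> real" where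
  "lambda_max H = Max {x::real. complex_of_real x \<in> eigenvalues H}"

definition pos_def :: "real^'n^'n \<Rightarrow> bool" where
  "pos_def M \<longleftrightarrow> transpose M = M \<and> (\<forall>x. x \<noteq> 0 \<longrightarrow> x \<bullet> (M *v x) > 0)"

definition stab_set :: "real^'x^'x \<Rightarrow> real^'u^'x \<Rightarrow> (real^'x^'u) set" where
  "stab_set A B = {K. spectral_radius (A - B ** K) < 1}"

definition stabilizable :: "real^'x^'x \<Rightarrow> real^'u^'x \<Rightarrow> bool" where
  "stabilizable A B \<longleftrightarrow> stab_set A B \<noteq> {}"

definition Jcost :: "real^'x^'x \<Rightarrow> real^'u^'x \<Rightarrow> real^'x^'x \<Rightarrow> real^'u^'u
                     \<Rightarrow> real^'x^'u \<Rightarrow> real" where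
  "Jcost A B Q R K =
     (SUP \<omega>\<in>{0..2*pi}.
        sqrt (lambda_max
          (transpose (matrix_inv (mat (cis (-\<omega>)) - cmat A + cmat (B ** K)))
           ** cmat (Q + transpose K ** R ** K)
           ** matrix_inv (mat (cis \<omega>) - cmat A + cmat (B ** K)))))"

(* J* = min over K of J(K) (the minimum equals the infimum when attained) *)
definition Jopt :: "real^'x^'x \<Rightarrow> real^'u^'x \<Rightarrow> real^'x^'x \<Rightarrow> real^'u^'u \<Rightarrow> real" where
  "Jopt A B Q R = (INF K\<in>stab_set A B. Jcost A B Q R K)"

end

theory Submission
  imports Defs "HOL-Complex_Analysis.Conformal_Mappings"
begin

text \<open>
  Let \<open>K\<close> be stabilizing with \<open>J(K) \<le> \<gamma>\<close>, \<open>M = A - B K\<close> and \<open>P = Q + K\<^sup>T R K \<ge> q I\<close>.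
  On the unit circle the matrix \<open>H(z)\<close> in the definition of \<open>J\<close> gives
  \<open>q |(z I - M)\<^sup>-\<^sup>1 v|\<^sup>2 \<le> v\<^sup>* H(z) v \<le> \<lambda>\<^sub>m\<^sub>a\<^sub>x(H(z)) |v|\<^sup>2 \<le> \<gamma>\<^sup>2 |v|\<^sup>2\<close>.
  As \<open>M\<close> is Schur stable, \<open>w \<mapsto> (w\<^sup>-\<^sup>1 I - M)\<^sup>-\<^sup>1\<close> is holomorphic on the closed unit disc,
  so by the maximum modulus principle the resolvent bound extends to all \<open>|\<mu>| \<ge> 1\<close>.
  If \<open>L\<close> is not stabilizing, \<open>A - B L\<close> has an eigenvector \<open>v\<close> for some \<open>|\<mu>| \<ge> 1\<close>, and
  \<open>(\<mu> I - M) v = B (K - L) v\<close> then bounds \<open>|K - L|\<close> from below by a constant depending only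
  on \<open>\<gamma>\<close>, \<open>q\<close>, \<open>B\<close> and the dimensions.
\<close>

section \<open>Characteristic polynomial and spectral radius\<close>

definition charpoly :: "'a::idom^'n^'n \<Rightarrow> 'a poly" where
  "charpoly M = (\<Sum>p | p permutes (UNIV::'n set). of_int (sign p) *
     (\<Prod>i\<in>UNIV. if p i = i then [:- M$i$i, 1:] else [:- M$i$p i:]))"

lemma poly_charpoly: "poly (charpoly M) z = det (mat z - M)"
  unfolding charpoly_def det_def
  by (auto simp: poly_sum poly_prod mat_def intro!: sum.cong prod.cong)

lemma coeff_charpoly_CARD: "coeff (charpoly (M::'a::idom^'n^'n)) CARD('n) = 1"
proof -
  define f where "f p = (\<Prod>i\<in>UNIV. if p i = i then [:- M$i$i, 1:] else [:- M$i$p i:])"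
    for p :: "'n \<Rightarrow> 'n"
  have "degree (f p) < CARD('n)" if p: "p permutes UNIV" "p \<noteq> id" for p
  proof -
    obtain j where j: "p j \<noteq> j" using p(2) by (metis eq_id_iff)
    have "degree (f p) \<le> (\<Sum>i\<in>UNIV. degree (if p i = i then [:- M$i$i, 1:] else [:- M$i$p i:]))"
      unfolding f_def by (rule order_trans[OF degree_prod_sum_le]) (simp_all add: o_def)
    also have "\<dots> < (\<Sum>i\<in>(UNIV::'n set). 1)"
      by (rule sum_strict_mono_ex1) (use j in auto)
    finally show ?thesis by simp
  qed
  then have off_diagonal: "coeff (of_int (sign p) * f p) CARD('n) = 0"
    if "p permutes UNIV" "p \<noteq> id" for p
    using that by (intro coeff_eq_0 le_less_trans[OF degree_mult_le]) simp_all
  have diagonal: "coeff (f id) CARD('n) = 1"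
  proof -
    have "degree (f id) = CARD('n)"
      unfolding f_def by (subst degree_prod_eq_sum_degree) auto
    moreover have "lead_coeff (f id) = 1"
      unfolding f_def by (subst lead_coeff_prod) auto
    ultimately show ?thesis by simp
  qed
  have "coeff (charpoly M) CARD('n) = (\<Sum>p | p permutes UNIV. coeff (of_int (sign p) * f p) CARD('n))"
    unfolding charpoly_def f_def by (simp add: coeff_sum)
  also have "\<dots> = coeff (f id) CARD('n)"
    using off_diagonal by (subst sum.remove[of _ id])
      (auto simp: finite_permutations intro!: sum.neutral)
  finally show ?thesis using diagonal by simp
qed

lemma charpoly_nonzero: "charpoly M \<noteq> 0"
  using coeff_charpoly_CARD[of M] by auto

lemma eigenvalues_charpoly: "eigenvalues M = {z. poly (charpoly M) z = 0}"
  by (simp add: eigenvalues_def poly_charpoly)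

lemma finite_eigenvalues: "finite (eigenvalues M)"
  unfolding eigenvalues_charpoly by (rule poly_roots_finite[OF charpoly_nonzero])

lemma eigenvalues_nonempty: "eigenvalues (M::complex^'n^'n) \<noteq> {}"
proof -
  have "CARD('n) \<le> degree (charpoly M)"
    using coeff_charpoly_CARD[of M] by (intro le_degree) simp
  then have "0 < degree (charpoly M)"
    using zero_less_card_finite[where 'a='n] by linarith
  then have "degree (charpoly M) \<in> {1..degree (charpoly M)}" by simp
  moreover have "coeff (charpoly M) (degree (charpoly M)) \<noteq> 0"
    using charpoly_nonzero by simp
  ultimately obtain z where "(\<Sum>i\<le>degree (charpoly M). coeff (charpoly M) i * z^i) = 0"
    using fundamental_theorem_of_algebra[of "coeff (charpoly M)"] by blast
  then have "poly (charpoly M) z = 0" by (simp add: poly_altdef)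
  then show ?thesis unfolding eigenvalues_charpoly by auto
qed

lemma spectral_radius_less_iff:
  "spectral_radius M < r \<longleftrightarrow> (\<forall>z\<in>eigenvalues (cmat M). cmod z < r)"
  unfolding spectral_radius_def by (simp add: finite_eigenvalues eigenvalues_nonempty)

lemma det_eq_0_iff_kernel:
  fixes M :: "'a::field^'n^'n"
  shows "det M = 0 \<longleftrightarrow> (\<exists>v. v \<noteq> 0 \<and> M *v v = 0)"
proof -
  have "det M = 0 \<longleftrightarrow> \<not> inj ((*v) M)"
    by (metis det_nz_iff_inj_gen matrix_vector_mul_linear_gen matrix_of_matrix_vector_mul)
  also have "\<dots> \<longleftrightarrow> (\<exists>v. v \<noteq> 0 \<and> M *v v = 0)"
    unfolding inj_def
    by (metis eq_iff_diff_eq_0 matrix_vector_mult_diff_distrib matrix_vector_mult_0_right)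
  finally show ?thesis .
qed

lemma
  fixes M :: "'a::field^'n^'n"
  assumes "det M \<noteq> 0"
  shows matrix_mul_rinv: "M ** matrix_inv M = mat 1"
    and matrix_mul_linv: "matrix_inv M ** M = mat 1"
proof -
  have "\<exists>M'. M ** M' = mat 1 \<and> M' ** M = mat 1"
    using assms invertible_det_nz invertible_def by blast
  then have "M ** matrix_inv M = mat 1 \<and> matrix_inv M ** M = mat 1"
    unfolding matrix_inv_def by (rule someI_ex)
  then show "M ** matrix_inv M = mat 1" "matrix_inv M ** M = mat 1" by auto
qed

lemma matrix_inv_unique:
  fixes M :: "'a::field^'n^'n"
  assumes "M ** W = mat 1" "W ** M = mat 1"
  shows "matrix_inv M = W"
proof -
  have "det M \<noteq> 0" using assms invertible_det_nz invertible_def by blast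
  then have "W = W ** (M ** matrix_inv M)" by (simp add: matrix_mul_rinv)
  also have "\<dots> = matrix_inv M" by (simp add: matrix_mul_assoc assms)
  finally show ?thesis by simp
qed

lemma matrix_inv_mult_vec_cancel:
  fixes M :: "'a::field^'n^'n"
  assumes "det M \<noteq> 0"
  shows "matrix_inv M *v (M *v v) = v"
  by (simp add: matrix_vector_mul_assoc matrix_mul_linv[OF assms])

lemma matrix_inv_mult_vec_cramer:
  fixes M :: "'a::field^'n^'n"
  assumes "det M \<noteq> 0"
  shows "(matrix_inv M *v b) $ k = det (\<chi> i j. if j = k then b$i else M$i$j) / det M"
  using cramer[OF assms, of "matrix_inv M *v b" b]
  by (simp add: matrix_vector_mul_assoc matrix_mul_rinv[OF assms])

lemma mat_mult_vec: "(mat c :: 'a::semiring_1^'n^'n) *v v = c *s v"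
  by (simp add: vec_eq_iff matrix_vector_mult_def mat_def if_distrib if_distribR cong: if_cong)

lemma complex_matrix_mult_vec_scaleR: "(H::complex^'n^'m) *v (c *\<^sub>R v) = c *\<^sub>R (H *v v)"
  by (rule linear_cmul[OF bounded_linear.linear[OF matrix_vector_mul_bounded_linear]])

lemma scaleR_complex_vec: "r *\<^sub>R (v::complex^'n) = complex_of_real r *s v"
  by (simp only: vec_eq_iff vector_scaleR_component vector_smult_component) (simp add: scaleR_conv_of_real)

lemma norm_le_sum_nth: "norm (x::'a::real_normed_vector^'n) \<le> (\<Sum>i\<in>UNIV. norm (x$i))"
  by (simp add: norm_vec_def L2_set_le_sum)

lemma norm_matrix_mult_vec_le:
  fixes N :: "'a::real_normed_div_algebra^'n^'m"
  shows "norm (N *v y) \<le> (\<Sum>i\<in>UNIV. \<Sum>j\<in>UNIV. norm (N$i$j)) * norm y"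
proof -
  have "norm ((N *v y)$i) \<le> (\<Sum>j\<in>UNIV. norm (N$i$j) * norm y)" for i
  proof -
    have "norm ((N *v y)$i) \<le> (\<Sum>j\<in>UNIV. norm (N$i$j) * norm (y$j))"
      unfolding matrix_vector_mult_def by (simp add: norm_mult[symmetric] norm_sum)
    also have "\<dots> \<le> (\<Sum>j\<in>UNIV. norm (N$i$j) * norm y)"
      by (intro sum_mono mult_left_mono Finite_Cartesian_Product.norm_nth_le norm_ge_zero)
    finally show ?thesis .
  qed
  then have "(\<Sum>i\<in>UNIV. norm ((N *v y)$i)) \<le> (\<Sum>i\<in>UNIV. \<Sum>j\<in>UNIV. norm (N$i$j) * norm y)"
    by (rule sum_mono)
  with norm_le_sum_nth[of "N *v y"] show ?thesis by (simp add: sum_distrib_right)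
qed

lemma abs_matrix_mult_nth_le:
  fixes B :: "real^'u^'x" and D :: "real^'y^'u"
  shows "\<bar>(B ** D) $ i $ j\<bar> \<le> CARD('u) * norm B * norm D"
proof -
  have entry: "\<bar>N $ a $ b\<bar> \<le> norm N" for N :: "real^'b^'a" and a b
    using component_le_norm_cart[of "N $ a" b] Finite_Cartesian_Product.norm_nth_le[of N a] by linarith
  have "\<bar>(B ** D) $ i $ j\<bar> \<le> (\<Sum>l\<in>UNIV. \<bar>B $ i $ l\<bar> * \<bar>D $ l $ j\<bar>)"
    unfolding matrix_matrix_mult_def by (simp add: sum_abs[THEN order_trans] abs_mult)
  also have "\<dots> \<le> (\<Sum>l\<in>(UNIV::'u set). norm B * norm D)"
    by (intro sum_mono mult_mono entry) auto
  finally show ?thesis by simp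
qed

lemma matrix_vector_mult_axis_nth: "(A *v axis j 1) $ i = (A::'a::semiring_1^'n^'m) $ i $ j"
  by (simp add: matrix_vector_mult_def axis_def if_distrib[of "times _"] cong: if_cong)

lemma continuous_on_det [continuous_intros]:
  fixes F :: "'a::topological_space \<Rightarrow> 'b::{real_normed_algebra_1,comm_ring_1}^'n^'n"
  assumes "\<And>i j. continuous_on S (\<lambda>w. F w $ i $ j)"
  shows "continuous_on S (\<lambda>w. det (F w))"
  unfolding det_def by (intro continuous_intros assms)

lemma holomorphic_on_det [holomorphic_intros]:
  fixes F :: "complex \<Rightarrow> complex^'n^'n"
  assumes "\<And>i j. (\<lambda>w. F w $ i $ j) holomorphic_on S"
  shows "(\<lambda>w. det (F w)) holomorphic_on S"
  unfolding det_def by (intro holomorphic_intros assms)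

section \<open>Hermitian forms and the largest eigenvalue\<close>

definition matrix_cnj :: "complex^'n^'m \<Rightarrow> complex^'n^'m" where
  "matrix_cnj N = (\<chi> i j. cnj (N$i$j))"

lemma matrix_cnj_mult: "matrix_cnj (M ** N) = matrix_cnj M ** matrix_cnj N"
  by (simp add: matrix_cnj_def matrix_matrix_mult_def vec_eq_iff)

lemma matrix_cnj_mat: "matrix_cnj (mat c) = mat (cnj c)"
  by (simp add: matrix_cnj_def mat_def vec_eq_iff)

lemma matrix_inv_matrix_cnj:
  assumes "det (M::complex^'n^'n) \<noteq> 0"
  shows "matrix_inv (matrix_cnj M) = matrix_cnj (matrix_inv M)"
  by (rule matrix_inv_unique)
    (simp_all add: matrix_cnj_mult[symmetric] matrix_mul_rinv[OF assms] matrix_mul_linv[OF assms]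
       matrix_cnj_mat)

text \<open>
  On complex vectors \<open>inner\<close> is the real part of the Hermitian product, so the conjugate
  transpose is the adjoint for it, and the symmetry \<open>inner u (H *v v) = inner v (H *v u)\<close>
  assumed below says exactly that \<open>H\<close> is Hermitian.\<close>
lemma inner_conjugate_transpose:
  fixes X :: "complex^'n^'m"
  shows "inner u (transpose (matrix_cnj X) *v w) = inner (X *v u) w"
proof -
  have inner_cnj: "inner a b = Re (cnj a * b)" for a b :: complex
    by (simp add: inner_complex_def)
  have "inner u (transpose (matrix_cnj X) *v w) = Re (\<Sum>i\<in>UNIV. \<Sum>j\<in>UNIV. cnj (u$i) * (cnj (X$j$i) * w$j))"
    by (simp add: inner_vec_def inner_cnj matrix_vector_mult_def transpose_def
        matrix_cnj_def sum_distrib_left)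
  also have "\<dots> = Re (\<Sum>j\<in>UNIV. \<Sum>i\<in>UNIV. cnj (X$j$i * u$i) * w$j)"
    by (subst sum.swap) (simp add: mult.commute mult.left_commute)
  also have "\<dots> = inner (X *v u) w"
    by (simp add: inner_vec_def inner_cnj matrix_vector_mult_def sum_distrib_right)
  finally show ?thesis .
qed

lemma inner_cmat_mult_vec:
  fixes P :: "real^'n^'n"
  shows "inner a (cmat P *v b) = (\<Sum>i\<in>UNIV. \<Sum>j\<in>UNIV. P$i$j * inner (a$i) (b$j))"
  by (simp add: inner_vec_def cmat_def matrix_vector_mult_def inner_sum_right
      inner_complex_def sum_distrib_left algebra_simps sum.distrib)

lemma inner_cmat_commute:
  fixes P :: "real^'n^'n"
  assumes "transpose P = P"
  shows "inner a (cmat P *v b) = inner b (cmat P *v a)"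
proof -
  have "P$i$j = P$j$i" for i j using assms by (metis transpose_def vec_lambda_beta)
  then show ?thesis unfolding inner_cmat_mult_vec
    by (subst sum.swap) (simp add: inner_commute)
qed

lemma cmat_quadratic_form_ge:
  fixes P :: "real^'n^'n"
  assumes "\<And>x. q * (norm x)\<^sup>2 \<le> x \<bullet> (P *v x)"
  shows "q * (norm y)\<^sup>2 \<le> inner y (cmat P *v y)"
proof -
  define y\<^sub>R y\<^sub>I where "y\<^sub>R = (\<chi> i. Re (y$i))" and "y\<^sub>I = (\<chi> i. Im (y$i))"
  have "inner y (cmat P *v y) = y\<^sub>R \<bullet> (P *v y\<^sub>R) + y\<^sub>I \<bullet> (P *v y\<^sub>I)"
    unfolding inner_cmat_mult_vec y\<^sub>R_def y\<^sub>I_def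
    by (simp add: inner_vec_def matrix_vector_mult_def inner_complex_def sum_distrib_left
        sum.distrib[symmetric] algebra_simps)
  moreover have "(norm y)\<^sup>2 = (norm y\<^sub>R)\<^sup>2 + (norm y\<^sub>I)\<^sup>2"
    unfolding y\<^sub>R_def y\<^sub>I_def
    by (simp add: power2_norm_eq_inner inner_vec_def inner_complex_def sum.distrib[symmetric])
  ultimately show ?thesis
    using assms[of y\<^sub>R] assms[of y\<^sub>I] by (simp add: algebra_simps)
qed

lemma quadratic_attains_max_on_sphere:
  fixes F :: "'a::euclidean_space \<Rightarrow> real"
  assumes "continuous_on UNIV F" and homogeneous: "\<And>c v. F (c *\<^sub>R v) = c\<^sup>2 * F v"
  obtains u where "norm u = 1" and "\<And>v. F v \<le> F u * (norm v)\<^sup>2"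
proof -
  have "\<exists>u\<in>sphere 0 1. \<forall>y\<in>sphere 0 1. F y \<le> F u"
    by (rule continuous_attains_sup[OF compact_sphere]) (auto intro: continuous_on_subset[OF assms(1)])
  then obtain u where u: "u \<in> sphere 0 1" and max: "\<And>y. y \<in> sphere 0 1 \<Longrightarrow> F y \<le> F u"
    by blast
  have "F v \<le> F u * (norm v)\<^sup>2" for v
  proof (cases "v = 0")
    case True
    then show ?thesis using homogeneous[of 0 0] by simp
  next
    case False
    have "F v = (norm v)\<^sup>2 * F ((1 / norm v) *\<^sub>R v)"
      using homogeneous[of "norm v" "(1 / norm v) *\<^sub>R v"] False by simp
    also have "\<dots> \<le> (norm v)\<^sup>2 * F u"
      using max[of "(1 / norm v) *\<^sub>R v"] False by (intro mult_left_mono) simp_all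
    finally show ?thesis by (simp add: mult.commute)
  qed
  with u show ?thesis using that by simp
qed

lemma rayleigh_maximizer_eigenvector:
  fixes H :: "complex^'n^'n"
  assumes sym: "\<And>u v. inner u (H *v v) = inner v (H *v u)"
    and u: "norm u = 1"
    and max: "\<And>v. inner v (H *v v) \<le> inner u (H *v u) * (norm v)\<^sup>2"
  shows "H *v u = inner u (H *v u) *\<^sub>R u"
proof (rule ccontr)
  define \<mu> where "\<mu> = inner u (H *v u)"
  define d where "d = H *v u - \<mu> *\<^sub>R u"
  assume "H *v u \<noteq> inner u (H *v u) *\<^sub>R u"
  then have d_pos: "inner d d > 0" by (simp add: d_def \<mu>_def)
  define c where "c = \<mu> * (norm d)\<^sup>2 - inner d (H *v d)"
  \<comment> \<open>first variation of the Rayleigh quotient at \<open>u\<close> in the direction \<open>d\<close>\<close>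
  have variation: "2 * t * inner d d \<le> t\<^sup>2 * c" for t
  proof -
    have "inner (u + t *\<^sub>R d) (H *v (u + t *\<^sub>R d))
        = \<mu> + 2 * t * inner d (H *v u) + t\<^sup>2 * inner d (H *v d)"
      by (simp add: \<mu>_def complex_matrix_mult_vec_scaleR sym[of u d] power2_eq_square algebra_simps)
    moreover have "(norm (u + t *\<^sub>R d))\<^sup>2 = 1 + 2 * t * inner d u + t\<^sup>2 * (norm d)\<^sup>2"
    proof -
      have "inner u u = 1" using u by (simp add: dot_square_norm)
      then show ?thesis unfolding power2_norm_eq_inner
        by (simp add: inner_commute[of u d] power2_eq_square algebra_simps)
    qed
    moreover have "inner d (H *v u) - \<mu> * inner d u = inner d d"
      by (simp add: d_def inner_diff_right)
    ultimately show ?thesis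
      using max[of "u + t *\<^sub>R d"] unfolding \<mu>_def c_def by (simp add: algebra_simps)
  qed
  define t where "t = inner d d / (\<bar>c\<bar> + 1)"
  have t_pos: "t > 0" using d_pos by (simp add: t_def)
  have "2 * inner d d \<le> t * c"
    using variation[of t] t_pos by (simp add: power2_eq_square)
  also have "\<dots> \<le> t * \<bar>c\<bar>" using t_pos by (simp add: mult_left_mono)
  also have "\<dots> < inner d d" using d_pos by (simp add: t_def field_simps)
  finally show False using d_pos by simp
qed

lemma finite_real_eigenvalues: "finite {x::real. complex_of_real x \<in> eigenvalues H}"
  using finite_vimageI[OF finite_eigenvalues inj_of_real] by (simp add: vimage_def)

lemma hermitian_max_eigenvalue:
  fixes H :: "complex^'n^'n"
  assumes sym: "\<And>u v. inner u (H *v v) = inner v (H *v u)"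
  obtains \<mu> where "complex_of_real \<mu> \<in> eigenvalues H" and "\<And>v. inner v (H *v v) \<le> \<mu> * (norm v)\<^sup>2"
proof -
  have "continuous_on UNIV (\<lambda>v. inner v (H *v v))" by (intro continuous_intros)
  moreover have "inner (c *\<^sub>R v) (H *v (c *\<^sub>R v)) = c\<^sup>2 * inner v (H *v v)" for c v
    by (simp add: complex_matrix_mult_vec_scaleR power2_eq_square)
  ultimately obtain u where u: "norm u = 1"
    and max: "\<And>v. inner v (H *v v) \<le> inner u (H *v u) * (norm v)\<^sup>2"
    by (rule quadratic_attains_max_on_sphere) blast
  have "(mat (complex_of_real (inner u (H *v u))) - H) *v u = 0"
    using rayleigh_maximizer_eigenvector[OF sym u max]
    by (simp add: matrix_vector_mult_diff_rdistrib mat_mult_vec scaleR_complex_vec)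
  then have "det (mat (complex_of_real (inner u (H *v u))) - H) = 0"
    using u det_eq_0_iff_kernel by (metis norm_zero zero_neq_one)
  then have "complex_of_real (inner u (H *v u)) \<in> eigenvalues H"
    by (simp add: eigenvalues_def)
  with max show ?thesis using that by blast
qed

lemma quadratic_form_le_lambda_max:
  fixes H :: "complex^'n^'n"
  assumes "\<And>u v. inner u (H *v v) = inner v (H *v u)"
  shows "inner v (H *v v) \<le> lambda_max H * (norm v)\<^sup>2"
proof -
  obtain \<mu> where \<mu>: "complex_of_real \<mu> \<in> eigenvalues H" "\<And>v. inner v (H *v v) \<le> \<mu> * (norm v)\<^sup>2"
    using hermitian_max_eigenvalue[OF assms] by blast
  have "\<mu> \<le> lambda_max H"
    unfolding lambda_max_def using \<mu>(1) finite_real_eigenvalues by (intro Max_ge) auto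
  then show ?thesis using \<mu>(2)[of v] by (meson mult_right_mono order_trans zero_le_power2)
qed

lemma lambda_max_le:
  fixes H :: "complex^'n^'n"
  assumes sym: "\<And>u v. inner u (H *v v) = inner v (H *v u)"
    and bound: "\<And>v. inner v (H *v v) \<le> U * (norm v)\<^sup>2"
  shows "lambda_max H \<le> U"
proof -
  obtain \<mu> where "complex_of_real \<mu> \<in> eigenvalues H"
    using hermitian_max_eigenvalue[OF sym] by blast
  then have "complex_of_real (lambda_max H) \<in> eigenvalues H"
    unfolding lambda_max_def using finite_real_eigenvalues Max_in[of "{x. complex_of_real x \<in> eigenvalues H}"]
    by auto
  then obtain u where u: "u \<noteq> 0" "(mat (complex_of_real (lambda_max H)) - H) *v u = 0"
    using det_eq_0_iff_kernel by (auto simp: eigenvalues_def)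
  then have "H *v u = lambda_max H *\<^sub>R u"
    by (simp add: matrix_vector_mult_diff_rdistrib mat_mult_vec scaleR_complex_vec)
  then have "lambda_max H * (norm u)\<^sup>2 \<le> U * (norm u)\<^sup>2"
    using bound[of u] by (simp add: power2_norm_eq_inner)
  then show ?thesis using u(1) by simp
qed

lemma pos_def_lower_bound:
  fixes Q :: "real^'n^'n"
  assumes "pos_def Q"
  obtains q where "q > 0" and "\<And>x. q * (norm x)\<^sup>2 \<le> x \<bullet> (Q *v x)"
proof -
  have "continuous_on UNIV (\<lambda>x. - (x \<bullet> (Q *v x)))" by (intro continuous_intros)
  moreover have "- ((c *\<^sub>R x) \<bullet> (Q *v (c *\<^sub>R x))) = c\<^sup>2 * - (x \<bullet> (Q *v x))" for c x
    by (simp add: matrix_vector_mult_scaleR power2_eq_square)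
  ultimately obtain u where u: "norm u = 1"
    and min: "\<And>x. - (x \<bullet> (Q *v x)) \<le> - (u \<bullet> (Q *v u)) * (norm x)\<^sup>2"
    by (rule quadratic_attains_max_on_sphere) blast
  have "u \<bullet> (Q *v u) > 0"
    using assms u unfolding pos_def_def by (metis norm_zero zero_neq_one)
  with min show ?thesis using that by (metis minus_mult_left neg_le_iff_le)
qed

lemma cost_matrix_lower_bound:
  fixes Q :: "real^'x^'x" and R :: "real^'u^'u" and K :: "real^'x^'u"
  assumes "\<And>x. q * (norm x)\<^sup>2 \<le> x \<bullet> (Q *v x)" and "\<And>y. 0 \<le> y \<bullet> (R *v y)"
  shows "q * (norm x)\<^sup>2 \<le> x \<bullet> ((Q + transpose K ** R ** K) *v x)"
proof -
  have adjoint: "x \<bullet> (transpose K *v y) = (K *v x) \<bullet> y" for y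
    by (simp only: dot_lmul_matrix[symmetric] vector_transpose_matrix)
  have "(transpose K ** R ** K) *v x = transpose K *v (R *v (K *v x))"
    by (simp add: matrix_vector_mul_assoc matrix_mul_assoc)
  then have "x \<bullet> ((transpose K ** R ** K) *v x) = (K *v x) \<bullet> (R *v (K *v x))"
    by (simp only: adjoint)
  then show ?thesis
    using assms(1)[of x] assms(2)[of "K *v x"]
    by (simp add: matrix_vector_mult_add_rdistrib inner_add_right)
qed

lemma transpose_cost_matrix:
  fixes Q :: "real^'x^'x" and R :: "real^'u^'u" and K :: "real^'x^'u"
  assumes "transpose Q = Q" and "transpose R = R"
  shows "transpose (Q + transpose K ** R ** K) = Q + transpose K ** R ** K"
proof -
  have "transpose (X + Y) = transpose X + transpose Y" for X Y :: "real^'x^'x"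
    by (simp add: transpose_def vec_eq_iff)
  with assms show ?thesis by (simp add: matrix_transpose_mul matrix_mul_assoc)
qed

section \<open>Resolvent estimates\<close>

lemma det_resolvent_nonzero:
  fixes M :: "complex^'n^'n"
  assumes "\<forall>z\<in>eigenvalues M. cmod z < 1" and "1 \<le> cmod z"
  shows "det (mat z - M) \<noteq> 0"
  using assms by (auto simp: eigenvalues_def)

lemma resolvent_bounded_on_circle:
  fixes M :: "complex^'n^'n"
  assumes stable: "\<forall>z\<in>eigenvalues M. cmod z < 1"
  obtains D where "\<And>z v. cmod z = 1 \<Longrightarrow> norm (matrix_inv (mat z - M) *v v) \<le> D * norm v"
proof -
  define cofactor where
    "cofactor z i j = det (\<chi> a b. if b = i then axis j 1 $ a else (mat z - M) $ a $ b)" for z i j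
  define entry_sum where "entry_sum z = (\<Sum>i\<in>UNIV. \<Sum>j\<in>UNIV. norm (matrix_inv (mat z - M) $ i $ j))"
    for z
  have entries: "continuous_on (sphere 0 1) (\<lambda>z. matrix_inv (mat z - M) $ i $ j)" for i j
  proof (rule continuous_on_eq)
    have "continuous_on UNIV (\<lambda>z. (\<chi> a b. if b = i then axis j 1 $ a else (mat z - M) $ a $ b) $ a $ b)"
      for a b by (cases "b = i"; cases "a = b"; simp add: mat_def; intro continuous_intros)
    moreover have "continuous_on UNIV (\<lambda>z. (mat z - M) $ a $ b)" for a b
      by (cases "a = b"; simp add: mat_def; intro continuous_intros)
    ultimately show "continuous_on (sphere 0 1) (\<lambda>z. cofactor z i j / det (mat z - M))"
      unfolding cofactor_def
      by (intro continuous_on_divide continuous_on_subset[OF continuous_on_det] subset_UNIV)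
        (auto simp: det_resolvent_nonzero[OF stable])
    show "cofactor z i j / det (mat z - M) = matrix_inv (mat z - M) $ i $ j" if "z \<in> sphere 0 1" for z
      using matrix_inv_mult_vec_cramer[OF det_resolvent_nonzero[OF stable], of z "axis j 1" i] that
      by (simp add: matrix_vector_mult_axis_nth cofactor_def)
  qed
  have "continuous_on (sphere 0 1) entry_sum"
    unfolding entry_sum_def by (intro continuous_on_sum continuous_on_norm entries)
  then have "\<exists>z\<^sub>0\<in>sphere 0 1. \<forall>z\<in>sphere 0 1. entry_sum z \<le> entry_sum z\<^sub>0"
    by (intro continuous_attains_sup[OF compact_sphere]) simp_all
  then obtain z\<^sub>0 where max: "\<forall>z\<in>sphere 0 1. entry_sum z \<le> entry_sum z\<^sub>0" by blast
  show ?thesis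
  proof (rule that)
    fix z v assume "cmod z = 1"
    have "norm (matrix_inv (mat z - M) *v v) \<le> entry_sum z * norm v"
      unfolding entry_sum_def by (rule norm_matrix_mult_vec_le)
    also have "\<dots> \<le> entry_sum z\<^sub>0 * norm v"
      using max \<open>cmod z = 1\<close> by (simp add: mult_right_mono)
    finally show "norm (matrix_inv (mat z - M) *v v) \<le> entry_sum z\<^sub>0 * norm v" .
  qed
qed

definition resolvent_gram :: "real^'n^'n \<Rightarrow> real^'n^'n \<Rightarrow> complex \<Rightarrow> complex^'n^'n" where
  "resolvent_gram M P z =
     transpose (matrix_cnj (matrix_inv (mat z - cmat M))) ** cmat P ** matrix_inv (mat z - cmat M)"

lemma Jcost_eq_SUP_resolvent_gram:
  assumes "K \<in> stab_set A B"
  shows "Jcost A B Q R K =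
    (SUP \<omega>\<in>{0..2*pi}. sqrt (lambda_max (resolvent_gram (A - B ** K) (Q + transpose K ** R ** K) (cis \<omega>))))"
  unfolding Jcost_def
proof (rule SUP_cong[OF refl])
  fix \<omega> :: real
  let ?X = "mat (cis \<omega>) - cmat (A - B ** K)"
  have "\<forall>z\<in>eigenvalues (cmat (A - B ** K)). cmod z < 1"
    using assms by (simp add: stab_set_def spectral_radius_less_iff)
  then have "det ?X \<noteq> 0" by (simp add: det_resolvent_nonzero)
  moreover have "mat (cis \<omega>) - cmat A + cmat (B ** K) = ?X"
    by (simp add: cmat_def vec_eq_iff)
  moreover have "mat (cis (-\<omega>)) - cmat A + cmat (B ** K) = matrix_cnj ?X"
    by (simp add: cmat_def matrix_cnj_def mat_def vec_eq_iff cis_cnj)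
  ultimately show "sqrt (lambda_max (transpose (matrix_inv (mat (cis (- \<omega>)) - cmat A + cmat (B ** K)))
        ** cmat (Q + transpose K ** R ** K) ** matrix_inv (mat (cis \<omega>) - cmat A + cmat (B ** K))))
      = sqrt (lambda_max (resolvent_gram (A - B ** K) (Q + transpose K ** R ** K) (cis \<omega>)))"
    unfolding resolvent_gram_def by (metis matrix_inv_matrix_cnj)
qed

lemma inner_resolvent_gram:
  "inner u (resolvent_gram M P z *v v) =
     inner (matrix_inv (mat z - cmat M) *v u) (cmat P *v (matrix_inv (mat z - cmat M) *v v))"
proof -
  have "resolvent_gram M P z *v v = transpose (matrix_cnj (matrix_inv (mat z - cmat M)))
      *v (cmat P *v (matrix_inv (mat z - cmat M) *v v))"
    by (simp add: resolvent_gram_def matrix_vector_mul_assoc matrix_mul_assoc)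
  then show ?thesis by (simp only: inner_conjugate_transpose)
qed

lemma resolvent_gram_hermitian:
  assumes "transpose P = P"
  shows "inner u (resolvent_gram M P z *v v) = inner v (resolvent_gram M P z *v u)"
  unfolding inner_resolvent_gram by (rule inner_cmat_commute[OF assms])

lemma bdd_above_resolvent_gram:
  fixes M P :: "real^'n^'n"
  assumes stable: "\<forall>z\<in>eigenvalues (cmat M). cmod z < 1" and "transpose P = P"
  shows "bdd_above ((\<lambda>\<omega>. sqrt (lambda_max (resolvent_gram M P (cis \<omega>)))) ` S)"
proof -
  obtain D where D: "\<And>z v. cmod z = 1 \<Longrightarrow> norm (matrix_inv (mat z - cmat M) *v v) \<le> D * norm v"
    using resolvent_bounded_on_circle[OF stable] by blast
  define c where "c = (\<Sum>i\<in>UNIV. \<Sum>j\<in>UNIV. norm (cmat P $ i $ j))"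
  have "lambda_max (resolvent_gram M P (cis \<omega>)) \<le> c * D\<^sup>2" for \<omega>
  proof (rule lambda_max_le[OF resolvent_gram_hermitian[OF assms(2)]])
    fix v
    define a where "a = matrix_inv (mat (cis \<omega>) - cmat M) *v v"
    have "inner v (resolvent_gram M P (cis \<omega>) *v v) = inner a (cmat P *v a)"
      by (simp add: inner_resolvent_gram a_def)
    also have "\<dots> \<le> norm a * (c * norm a)"
      using norm_cauchy_schwarz norm_matrix_mult_vec_le[of "cmat P" a]
      by (metis c_def mult_left_mono norm_ge_zero order_trans)
    also have "\<dots> = c * (norm a)\<^sup>2" by (simp add: power2_eq_square)
    also have "\<dots> \<le> c * (D * norm v)\<^sup>2"
      using D[of "cis \<omega>" v] unfolding a_def c_def
      by (intro mult_left_mono power_mono) (simp_all add: sum_nonneg)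
    finally show "inner v (resolvent_gram M P (cis \<omega>) *v v) \<le> c * D\<^sup>2 * (norm v)\<^sup>2"
      by (simp add: power_mult_distrib)
  qed
  then show ?thesis by (auto intro!: bdd_aboveI[of _ "sqrt (c * D\<^sup>2)"] real_sqrt_le_mono)
qed

lemma resolvent_bound_on_circle:
  fixes M P :: "real^'n^'n"
  assumes stable: "\<forall>z\<in>eigenvalues (cmat M). cmod z < 1"
    and P: "transpose P = P" "\<And>x. q * (norm x)\<^sup>2 \<le> x \<bullet> (P *v x)" "q > 0"
    and J: "(SUP \<omega>\<in>{0..2*pi}. sqrt (lambda_max (resolvent_gram M P (cis \<omega>)))) \<le> \<gamma>"
    and z: "cmod z = 1"
  shows "norm (matrix_inv (mat z - cmat M) *v v) \<le> \<bar>\<gamma>\<bar> / sqrt q * norm v"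
proof -
  obtain \<omega> where \<omega>: "\<omega> \<in> {0..2*pi}" "z = cis \<omega>"
    using z Arg2pi_eq[of z] Arg2pi_ge_0[of z] Arg2pi_lt_2pi[of z]
    by (intro that[of "Arg2pi z"]) (auto simp: cis_conv_exp)
  let ?H = "resolvent_gram M P z"
  have "sqrt (lambda_max ?H) \<le> \<gamma>"
    using cSUP_upper[OF \<omega>(1) bdd_above_resolvent_gram[OF stable P(1)]] J
    unfolding \<omega>(2) by (rule order_trans)
  then have "lambda_max ?H \<le> \<gamma>\<^sup>2" by (rule sqrt_le_D)
  have "q * (norm (matrix_inv (mat z - cmat M) *v v))\<^sup>2 \<le> inner v (?H *v v)"
    unfolding inner_resolvent_gram by (rule cmat_quadratic_form_ge[OF P(2)])
  also have "\<dots> \<le> lambda_max ?H * (norm v)\<^sup>2"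
    by (rule quadratic_form_le_lambda_max[OF resolvent_gram_hermitian[OF P(1)]])
  also have "\<dots> \<le> \<gamma>\<^sup>2 * (norm v)\<^sup>2"
    using \<open>lambda_max ?H \<le> \<gamma>\<^sup>2\<close> by (simp add: mult_right_mono)
  finally have "(norm (matrix_inv (mat z - cmat M) *v v))\<^sup>2 \<le> (\<bar>\<gamma>\<bar> / sqrt q * norm v)\<^sup>2"
    using P(3) by (simp add: field_simps)
  then show ?thesis by (rule power2_le_imp_le) (use P(3) in simp)
qed

text \<open>
  Multiplying the rows of \<open>mat (1/w) - M\<close> by \<open>w\<close> in Cramer's rule removes the singularity
  at \<open>w = 0\<close>: the resolvent at \<open>1/w\<close> extends holomorphically to the unit disc.\<close>
lemma resolvent_at_reciprocal_holomorphic: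
  fixes M :: "complex^'n^'n"
  assumes stable: "\<forall>z\<in>eigenvalues M. cmod z < 1"
  obtains g where "g holomorphic_on ball 0 1" and "continuous_on (cball 0 1) g"
    and "\<And>w. w \<in> cball 0 1 \<Longrightarrow> w \<noteq> 0 \<Longrightarrow> g w = (matrix_inv (mat (1/w) - M) *v b) $ k"
proof -
  define E where "E w = (\<chi> i j. (if i = j then 1 else 0) - w * M$i$j)" for w :: complex
  define N where "N w = (\<chi> i j. if j = k then w * b$i else E w $ i $ j)" for w :: complex
  have det_E: "det (E w) = w ^ CARD('n) * det (mat (1/w) - M)" if "w \<noteq> 0" for w
  proof -
    have rows: "E w = (\<chi> i. w *s ((mat (1/w) - M) $ i))"
      using that by (simp add: E_def mat_def vec_eq_iff right_diff_distrib)
    show ?thesis unfolding rows det_rows_mul vec_lambda_eta by simp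
  qed
  have det_N: "det (N w) = w ^ CARD('n) * det (\<chi> i j. if j = k then b$i else (mat (1/w) - M)$i$j)"
    if "w \<noteq> 0" for w
  proof -
    have rows: "N w = (\<chi> i. w *s ((\<chi> i j. if j = k then b$i else (mat (1/w) - M)$i$j) $ i))"
      using that by (simp add: N_def E_def mat_def vec_eq_iff right_diff_distrib)
    show ?thesis unfolding rows det_rows_mul vec_lambda_eta by simp
  qed
  have E_nonzero: "det (E w) \<noteq> 0" if "w \<in> cball 0 1" for w
  proof (cases "w = 0")
    case True
    then have "E w = mat 1" by (simp add: E_def mat_def vec_eq_iff)
    then show ?thesis by simp
  next
    case False
    then have "1 \<le> cmod (1/w)" using that by (simp add: norm_divide field_simps)
    then show ?thesis using det_E[OF False] det_resolvent_nonzero[OF stable] False by simp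
  qed
  have holo_E: "(\<lambda>w. det (E w)) holomorphic_on UNIV"
    unfolding E_def by (intro holomorphic_on_det, unfold vec_lambda_beta, intro holomorphic_intros)
  have "(\<lambda>w. N w $ i $ j) holomorphic_on UNIV" for i j
    unfolding N_def E_def vec_lambda_beta by (cases "j = k") (auto intro!: holomorphic_intros)
  then have holo_N: "(\<lambda>w. det (N w)) holomorphic_on UNIV" by (rule holomorphic_on_det)
  show ?thesis
  proof
    show "(\<lambda>w. det (N w) / det (E w)) holomorphic_on ball 0 1"
      using E_nonzero by (intro holomorphic_intros holomorphic_on_subset[OF holo_N]
          holomorphic_on_subset[OF holo_E]) auto
    show "continuous_on (cball 0 1) (\<lambda>w. det (N w) / det (E w))"
      using E_nonzero by (intro continuous_intros holomorphic_on_imp_continuous_on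
          holomorphic_on_subset[OF holo_N] holomorphic_on_subset[OF holo_E]) auto
    fix w :: complex
    assume "w \<in> cball 0 1" "w \<noteq> 0"
    then have "1 \<le> cmod (1/w)" by (simp add: norm_divide field_simps)
    then have "det (mat (1/w) - M) \<noteq> 0" by (rule det_resolvent_nonzero[OF stable])
    then show "det (N w) / det (E w) = (matrix_inv (mat (1/w) - M) *v b) $ k"
      using \<open>w \<noteq> 0\<close> by (simp add: matrix_inv_mult_vec_cramer det_E det_N)
  qed
qed

lemma resolvent_component_bound_outside_disc:
  fixes M :: "complex^'n^'n"
  assumes stable: "\<forall>z\<in>eigenvalues M. cmod z < 1"
    and circle: "\<And>z. cmod z = 1 \<Longrightarrow> norm (matrix_inv (mat z - M) *v b) \<le> C"
    and \<mu>: "1 \<le> cmod \<mu>"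
  shows "norm ((matrix_inv (mat \<mu> - M) *v b) $ k) \<le> C"
proof (cases "cmod \<mu> = 1")
  case True
  then show ?thesis using circle[of \<mu>] Finite_Cartesian_Product.norm_nth_le order_trans by blast
next
  case False
  obtain g where holo: "g holomorphic_on ball 0 1" and cont: "continuous_on (cball 0 1) g"
    and g: "\<And>w. w \<in> cball 0 1 \<Longrightarrow> w \<noteq> 0 \<Longrightarrow> g w = (matrix_inv (mat (1/w) - M) *v b) $ k"
    using resolvent_at_reciprocal_holomorphic[OF stable] by blast
  have "norm (g w) \<le> C" if "w \<in> frontier (ball 0 1)" for w
  proof -
    have "cmod w = 1" using that by simp
    then show ?thesis
      using g[of w] circle[of "1/w"] Finite_Cartesian_Product.norm_nth_le order_trans
      by (fastforce simp: norm_divide)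
  qed
  moreover have "1/\<mu> \<in> ball 0 1" using \<mu> False by (simp add: norm_divide divide_less_eq)
  ultimately have "norm (g (1/\<mu>)) \<le> C"
    using maximum_modulus_frontier[of g "ball 0 1"] holo cont by (simp add: interior_open)
  moreover have "\<mu> \<noteq> 0" using \<mu> by auto
  ultimately show ?thesis using g[of "1/\<mu>"] \<open>1/\<mu> \<in> ball 0 1\<close> by simp
qed

lemma resolvent_bound_outside_disc:
  fixes M :: "complex^'n^'n" and C :: real
  assumes stable: "\<forall>z\<in>eigenvalues M. cmod z < 1"
    and circle: "\<And>z b. cmod z = 1 \<Longrightarrow> norm (matrix_inv (mat z - M) *v b) \<le> C * norm b"
    and \<mu>: "1 \<le> cmod \<mu>"
  shows "norm (matrix_inv (mat \<mu> - M) *v b) \<le> CARD('n) * C * norm b"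
proof -
  have "norm (matrix_inv (mat \<mu> - M) *v b) \<le> (\<Sum>k\<in>UNIV. norm ((matrix_inv (mat \<mu> - M) *v b) $ k))"
    by (rule norm_le_sum_nth)
  also have "\<dots> \<le> (\<Sum>k\<in>(UNIV::'n set). C * norm b)"
    by (intro sum_mono resolvent_component_bound_outside_disc[OF stable circle \<mu>])
  finally show ?thesis by simp
qed

section \<open>Distance of the sublevel set to the unstable gains\<close>

lemma eigenvalue_perturbation_lower_bound:
  fixes M N :: "complex^'n^'n"
  assumes "det (mat \<mu> - M) \<noteq> 0"
    and resolvent: "\<And>b. norm (matrix_inv (mat \<mu> - M) *v b) \<le> C * norm b"
    and "\<mu> \<in> eigenvalues (M + N)"
  shows "1 \<le> C * (\<Sum>i\<in>UNIV. \<Sum>j\<in>UNIV. norm (N$i$j))"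
proof -
  obtain v where "v \<noteq> 0" and "(mat \<mu> - (M + N)) *v v = 0"
    using assms(3) det_eq_0_iff_kernel by (auto simp: eigenvalues_def)
  then have "(mat \<mu> - M) *v v = N *v v"
    by (simp add: matrix_vector_mult_diff_rdistrib matrix_vector_mult_add_rdistrib)
  then have "v = matrix_inv (mat \<mu> - M) *v (N *v v)"
    using matrix_inv_mult_vec_cancel[OF assms(1), of v] by simp
  then have v_le: "norm v \<le> C * norm (N *v v)"
    using resolvent[of "N *v v"] by simp
  have "0 < norm v" using \<open>v \<noteq> 0\<close> by simp
  have "0 \<le> C"
  proof (rule ccontr)
    assume "\<not> 0 \<le> C"
    then have "C * norm (N *v v) \<le> 0" by (simp add: mult_nonpos_nonneg)
    with v_le \<open>0 < norm v\<close> show False by linarith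
  qed
  have "norm v \<le> C * ((\<Sum>i\<in>UNIV. \<Sum>j\<in>UNIV. norm (N$i$j)) * norm v)"
    using v_le mult_left_mono[OF norm_matrix_mult_vec_le \<open>0 \<le> C\<close>] by (rule order_trans)
  then show ?thesis using \<open>0 < norm v\<close> by (simp add: mult.assoc[symmetric])
qed

lemma Jcost_sublevel_resolvent_bound:
  fixes A :: "real^'x^'x" and B :: "real^'u^'x" and Q :: "real^'x^'x" and R :: "real^'u^'u"
  assumes "pos_def Q" and "pos_def R"
    and q: "q > 0" "\<And>x. q * (norm x)\<^sup>2 \<le> x \<bullet> (Q *v x)"
    and K: "K \<in> stab_set A B" "Jcost A B Q R K \<le> \<gamma>"
    and \<mu>: "1 \<le> cmod \<mu>"
  shows "norm (matrix_inv (mat \<mu> - cmat (A - B ** K)) *v b) \<le> CARD('x) * (\<bar>\<gamma>\<bar> / sqrt q) * norm b"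
proof -
  let ?P = "Q + transpose K ** R ** K"
  have stable: "\<forall>z\<in>eigenvalues (cmat (A - B ** K)). cmod z < 1"
    using K(1) by (simp add: stab_set_def spectral_radius_less_iff)
  have symmetric: "transpose ?P = ?P"
    using assms(1,2) by (intro transpose_cost_matrix) (simp_all add: pos_def_def)
  have "0 \<le> y \<bullet> (R *v y)" for y
    using assms(2) unfolding pos_def_def by (cases "y = 0") (auto intro: less_imp_le)
  then have positive: "q * (norm x)\<^sup>2 \<le> x \<bullet> (?P *v x)" for x
    by (rule cost_matrix_lower_bound[OF q(2)])
  have J: "(SUP \<omega>\<in>{0..2*pi}. sqrt (lambda_max (resolvent_gram (A - B ** K) ?P (cis \<omega>)))) \<le> \<gamma>"
    using K by (simp add: Jcost_eq_SUP_resolvent_gram)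
  have circle: "norm (matrix_inv (mat z - cmat (A - B ** K)) *v v) \<le> \<bar>\<gamma>\<bar> / sqrt q * norm v"
    if "cmod z = 1" for z v
    by (rule resolvent_bound_on_circle[OF stable symmetric positive q(1) J that])
  show ?thesis by (rule resolvent_bound_outside_disc[OF stable circle \<mu>])
qed

lemma sublevel_unstable_distance:
  fixes A :: "real^'x^'x" and B :: "real^'u^'x" and Q :: "real^'x^'x" and R :: "real^'u^'u"
  assumes "pos_def Q" and "pos_def R"
    and q: "q > 0" "\<And>x. q * (norm x)\<^sup>2 \<le> x \<bullet> (Q *v x)"
    and K: "K \<in> stab_set A B" "Jcost A B Q R K \<le> \<gamma>" and L: "L \<notin> stab_set A B"
  shows "1 \<le> CARD('x) * (\<bar>\<gamma>\<bar> / sqrt q) * (CARD('x) * CARD('x) * (CARD('u) * norm B)) * norm (K - L)"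
proof -
  define C where "C = CARD('x) * (\<bar>\<gamma>\<bar> / sqrt q)"
  have "C \<ge> 0" using q(1) by (simp add: C_def)
  have stable: "\<forall>z\<in>eigenvalues (cmat (A - B ** K)). cmod z < 1"
    using K(1) by (simp add: stab_set_def spectral_radius_less_iff)
  obtain \<mu> where \<mu>: "\<mu> \<in> eigenvalues (cmat (A - B ** L))" "1 \<le> cmod \<mu>"
    using L by (auto simp: stab_set_def spectral_radius_less_iff not_less)
  have "1 \<le> C * (\<Sum>i\<in>UNIV. \<Sum>j\<in>UNIV. norm (cmat (B ** (K - L)) $ i $ j))"
  proof (rule eigenvalue_perturbation_lower_bound)
    show "det (mat \<mu> - cmat (A - B ** K)) \<noteq> 0"
      by (rule det_resolvent_nonzero[OF stable \<mu>(2)])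
    show "norm (matrix_inv (mat \<mu> - cmat (A - B ** K)) *v b) \<le> C * norm b" for b
      unfolding C_def by (rule Jcost_sublevel_resolvent_bound[OF assms(1,2) q K \<mu>(2)])
    have "cmat (A - B ** L) = cmat (A - B ** K) + cmat (B ** (K - L))"
      by (simp add: cmat_def vec_eq_iff matrix_matrix_mult_def sum_subtractf algebra_simps)
    then show "\<mu> \<in> eigenvalues (cmat (A - B ** K) + cmat (B ** (K - L)))"
      using \<mu>(1) by simp
  qed
  also have "\<dots> \<le> C * (\<Sum>i\<in>(UNIV::'x set). \<Sum>j\<in>(UNIV::'x set). CARD('u) * norm B * norm (K - L))"
    unfolding cmat_def
    by (intro mult_left_mono sum_mono \<open>C \<ge> 0\<close>) (simp add: abs_matrix_mult_nth_le)
  finally show ?thesis by (simp add: C_def mult.assoc)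
qed

theorem lemma4:
  fixes A :: "real^'x^'x" and B :: "real^'u^'x"
    and Q :: "real^'x^'x" and R :: "real^'u^'u" and \<gamma> :: real
  assumes "pos_def Q" and "pos_def R" and "stabilizable A B"
    and "\<gamma> \<ge> Jopt A B Q R"
  shows "\<exists>\<epsilon>>0. \<forall>K\<in>{K\<in>stab_set A B. Jcost A B Q R K \<le> \<gamma>}.
           \<forall>L\<in>- stab_set A B. norm (K - L) \<ge> \<epsilon>"
proof -
  obtain q where q: "q > 0" "\<And>x. q * (norm x)\<^sup>2 \<le> x \<bullet> (Q *v x)"
    using pos_def_lower_bound[OF assms(1)] by blast
  define c where "c = CARD('x) * (\<bar>\<gamma>\<bar> / sqrt q) * (CARD('x) * CARD('x) * (CARD('u) * norm B))"
  have "c \<ge> 0" using q(1) by (simp add: c_def)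
  have "1 / (c + 1) \<le> norm (K - L)"
    if "K \<in> stab_set A B" "Jcost A B Q R K \<le> \<gamma>" "L \<notin> stab_set A B" for K L
  proof -
    have "1 \<le> c * norm (K - L)"
      unfolding c_def by (rule sublevel_unstable_distance[OF assms(1,2) q that])
    then have "1 \<le> c * norm (K - L) + norm (K - L)"
      using norm_ge_zero[of "K - L"] by linarith
    then show ?thesis using \<open>c \<ge> 0\<close> by (simp add: divide_le_eq algebra_simps)
  qed
  then show ?thesis using \<open>c \<ge> 0\<close> by (intro exI[of _ "1 / (c + 1)"]) auto
qed

end
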